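(* Let $G$ be a connected graph on $n$ vertices with $2\leq n\leq 7$. If $\psi_{n-1}(G)=2$, then $\psi_n(G)=1$.
   Context: All graphs are finite and simple. For a graph $G$ and a positive integer $k$, a $k$-path vertex cover ($k$-PVC) of $G$ is a set $S$ of vertices such that every path on $k$ vertices in $G$ contains at least one vertex of $S$ (if $G$ has no path on $k$ vertices, the empty set is a $k$-PVC). $\psi_k(G)$ denotes the minimum cardinality of a $k$-PVC of $G$. *)

theory Defs
  imports Main
begin

definition simple_graph :: "'a set \<Rightarrow> ('a \<Rightarrow> 'a \<Rightarrow> bool) \<Rightarrow> bool" where
  "simple_graph V E \<longleftrightarrow> finite V \<and> (\<forall>x y. E x y \<longrightarrow> x \<in> V \<and> y \<in> V)
     \<and> (\<forall>x y. E x y \<longrightarrow> E y x) \<and> (\<forall>x. \<not> E x x)"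

text \<open>A path in G, given by its vertex sequence (distinct vertices, consecutive ones adjacent).
  A path on k vertices is such a list of length k.\<close>
definition is_path :: "'a set \<Rightarrow> ('a \<Rightarrow> 'a \<Rightarrow> bool) \<Rightarrow> 'a list \<Rightarrow> bool" where
  "is_path V E xs \<longleftrightarrow> xs \<noteq> [] \<and> distinct xs \<and> set xs \<subseteq> V
     \<and> (\<forall>i. Suc i < length xs \<longrightarrow> E (xs ! i) (xs ! Suc i))"

definition connected_graph :: "'a set \<Rightarrow> ('a \<Rightarrow> 'a \<Rightarrow> bool) \<Rightarrow> bool" where
  "connected_graph V E \<longleftrightarrow> V \<noteq> {} \<and>
     (\<forall>u\<in>V. \<forall>v\<in>V. \<exists>xs. is_path V E xs \<and> hd xs = u \<and> last xs = v)"

definition is_kpvc :: "'a set \<Rightarrow> ('a \<Rightarrow> 'a \<Rightarrow> bool) \<Rightarrow> nat \<Rightarrow> 'a set \<Rightarrow> bool" where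
  "is_kpvc V E k S \<longleftrightarrow> S \<subseteq> V \<and>
     (\<forall>xs. is_path V E xs \<and> length xs = k \<longrightarrow> set xs \<inter> S \<noteq> {})"

definition psi :: "'a set \<Rightarrow> ('a \<Rightarrow> 'a \<Rightarrow> bool) \<Rightarrow> nat \<Rightarrow> nat" where
  "psi V E k = (LEAST m. \<exists>S. is_kpvc V E k S \<and> card S = m)"

end

theory Submission imports Defs begin

text \<open>Since \<open>\<psi>\<^sub>n\<^sub>-\<^sub>1(G) = 2\<close>, every vertex is missed by some path on \<open>n - 1\<close>
  vertices. If G had no Hamiltonian path, such a path P missing v would be a longest path, so
  the neighbours of v on P are inner vertices of P, no two of them consecutive; as P has at
  most 6 vertices, v has at most two neighbours. But for an edge uv, the path missing u
  passes through v as an inner vertex, which gives v three neighbours. Hence G has a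
  Hamiltonian path, and any single vertex meets every path on n vertices.\<close>

lemma is_path_iff_successively:
  "is_path V E xs \<longleftrightarrow> xs \<noteq> [] \<and> distinct xs \<and> set xs \<subseteq> V \<and> successively E xs"
  unfolding is_path_def successively_conv_nth ..

lemma length_path_le_card:
  assumes "simple_graph V E" "is_path V E xs"
  shows "length xs \<le> card V"
  using assms unfolding simple_graph_def is_path_def by (metis card_mono distinct_card)

lemma set_path_eq_if_length_eq_card:
  assumes "simple_graph V E" "is_path V E xs" "length xs = card V"
  shows "set xs = V"
  using assms unfolding simple_graph_def is_path_def by (metis card_subset_eq distinct_card)

lemma set_path_eq_if_avoids:
  assumes "simple_graph V E" "is_path V E xs" "length xs = card V - 1" "v \<in> V" "v \<notin> set xs"
  shows "set xs = V - {v}"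
proof -
  have "finite V" using assms(1) by (simp add: simple_graph_def)
  moreover have "set xs \<subseteq> V - {v}" using assms(2,5) by (auto simp: is_path_def)
  moreover have "card (set xs) = card (V - {v})"
    using assms(2-4) \<open>finite V\<close> by (simp add: is_path_def distinct_card)
  ultimately show ?thesis by (simp add: card_subset_eq)
qed

lemma path_insert:
  assumes "is_path V E (xs @ ys)" "v \<in> V" "v \<notin> set (xs @ ys)"
    and "xs \<noteq> [] \<Longrightarrow> E (last xs) v" "ys \<noteq> [] \<Longrightarrow> E v (hd ys)"
  shows "is_path V E (xs @ v # ys)"
  using assms unfolding is_path_iff_successively
  by (auto simp: successively_append_iff successively_Cons)

definition longest_path :: "'a set \<Rightarrow> ('a \<Rightarrow> 'a \<Rightarrow> bool) \<Rightarrow> 'a list \<Rightarrow> bool" where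
  "longest_path V E xs \<longleftrightarrow> is_path V E xs \<and> (\<forall>ys. is_path V E ys \<longrightarrow> length ys \<le> length xs)"

lemma longest_path_if_no_hamiltonian_path:
  assumes "simple_graph V E" "is_path V E xs" "length xs = card V - 1"
    and "\<nexists>ys. is_path V E ys \<and> length ys = card V"
  shows "longest_path V E xs"
  unfolding longest_path_def
proof (intro conjI allI impI)
  fix ys assume "is_path V E ys"
  then have "length ys \<le> card V" "length ys \<noteq> card V"
    using length_path_le_card[OF assms(1)] assms(4) by auto
  then show "length ys \<le> length xs" using assms(3) by linarith
qed (rule assms(2))

lemma longest_path_not_extendable:
  assumes "longest_path V E (xs @ ys)" "v \<in> V" "v \<notin> set (xs @ ys)"
    and "xs \<noteq> [] \<Longrightarrow> E (last xs) v" "ys \<noteq> [] \<Longrightarrow> E v (hd ys)"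
  shows False
proof -
  have "is_path V E (xs @ ys)" using assms(1) by (simp add: longest_path_def)
  then have "is_path V E (xs @ v # ys)" by (rule path_insert[OF _ assms(2-5)])
  then have "length (xs @ v # ys) \<le> length (xs @ ys)"
    using assms(1) unfolding longest_path_def by blast
  then show False by simp
qed

context
  fixes V E P v
  assumes G: "simple_graph V E" and P: "longest_path V E P"
    and v: "v \<in> V" "v \<notin> set P"
begin

lemma longest_path_neighbour_inner:
  assumes "j < length P" "E v (P ! j)"
  shows "0 < j \<and> Suc j < length P"
proof (rule ccontr)
  have path: "is_path V E P" using P by (simp add: longest_path_def)
  assume "\<not> (0 < j \<and> Suc j < length P)"
  then consider "j = 0" | "j = length P - 1" using assms(1) by linarith
  then show False
  proof cases
    case 1
    then have "hd P = P ! j" using path by (simp add: is_path_def hd_conv_nth)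
    then show False
      using longest_path_not_extendable[of V E "[]" P] P v assms(2) by auto
  next
    case 2
    then have "last P = P ! j" using path by (simp add: is_path_def last_conv_nth)
    then have "E (last P) v" using G assms(2) by (simp add: simple_graph_def)
    then show False
      using longest_path_not_extendable[of V E P "[]"] P v by auto
  qed
qed

lemma longest_path_neighbours_not_consecutive:
  assumes "Suc j < length P" "E v (P ! j)"
  shows "\<not> E v (P ! Suc j)"
proof
  assume "E v (P ! Suc j)"
  moreover have "E (P ! j) v" using G assms(2) by (simp add: simple_graph_def)
  moreover have "last (take (Suc j) P) = P ! j" "hd (drop (Suc j) P) = P ! Suc j"
    using assms(1) by (simp_all add: take_Suc_conv_app_nth hd_drop_conv_nth)
  ultimately show False
    using longest_path_not_extendable[of V E "take (Suc j) P" "drop (Suc j) P"] P v assms(1)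
    by (metis append_take_drop_id drop_eq_Nil2 not_less)
qed

lemma longest_path_three_neighbours:
  assumes "a \<in> set P" "b \<in> set P" "c \<in> set P" "a \<noteq> b" "a \<noteq> c" "b \<noteq> c"
    and "E v a" "E v b" "E v c"
  shows "7 \<le> length P"
proof -
  obtain ja jb jc where j: "ja < length P" "P ! ja = a" "jb < length P" "P ! jb = b"
      "jc < length P" "P ! jc = c"
    using assms(1-3) by (metis in_set_conv_nth)
  have inner: "0 < ja \<and> Suc ja < length P" "0 < jb \<and> Suc jb < length P"
      "0 < jc \<and> Suc jc < length P"
    using longest_path_neighbour_inner j assms(7-9) by auto
  have apart: "Suc x < y \<or> Suc y < x"
    if "x < length P" "y < length P" "x \<noteq> y" "E v (P ! x)" "E v (P ! y)" for x y
    using longest_path_neighbours_not_consecutive[of x] longest_path_neighbours_not_consecutive[of y]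
      that by (metis Suc_lessI linorder_neqE_nat)
  have "ja \<noteq> jb" "ja \<noteq> jc" "jb \<noteq> jc" using j assms(4-6) by auto
  then have "Suc ja < jb \<or> Suc jb < ja" "Suc ja < jc \<or> Suc jc < ja" "Suc jb < jc \<or> Suc jc < jb"
    using apart j assms(7-9) by metis+
  then show ?thesis using inner by (elim disjE) linarith+
qed

lemma longest_path_neighbour_has_two_path_neighbours:
  assumes "w \<in> set P" "E v w"
  obtains a b where "a \<in> set P" "b \<in> set P" "a \<noteq> b" "E w a" "E w b"
proof -
  have path: "is_path V E P" using P by (simp add: longest_path_def)
  obtain i where i: "i < length P" "P ! i = w" using assms(1) by (metis in_set_conv_nth)
  then have "0 < i" "Suc i < length P"
    using longest_path_neighbour_inner assms(2) by auto
  then obtain k where k: "i = Suc k" "Suc i < length P" using not0_implies_Suc by blast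
  have "E (P ! k) w" "E w (P ! Suc i)"
    using path k i(2) unfolding is_path_def by auto
  moreover have "P ! k \<noteq> P ! Suc i"
    using path k unfolding is_path_def by (simp add: nth_eq_iff_index_eq)
  ultimately show thesis
    using that[of "P ! k" "P ! Suc i"] G k unfolding simple_graph_def by auto
qed

end

lemma hamiltonian_path_if_vertices_avoidable:
  assumes G: "simple_graph V E" and "card V \<le> 7" and "E u v"
    and avoid: "\<And>w. w \<in> V \<Longrightarrow> \<exists>P. is_path V E P \<and> length P = card V - 1 \<and> w \<notin> set P"
  shows "\<exists>H. is_path V E H \<and> length H = card V"
proof (rule ccontr)
  assume no_ham: "\<nexists>H. is_path V E H \<and> length H = card V"
  have uv: "u \<in> V" "v \<in> V" "u \<noteq> v"
    using G \<open>E u v\<close> unfolding simple_graph_def by metis+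
  obtain Q where Q: "is_path V E Q" "length Q = card V - 1" "u \<notin> set Q"
    using avoid uv(1) by blast
  have Q_longest: "longest_path V E Q"
    using longest_path_if_no_hamiltonian_path[OF G Q(1,2) no_ham] .
  have "v \<in> set Q" using set_path_eq_if_avoids[OF G Q(1,2) uv(1) Q(3)] uv by blast
  then obtain a b where ab: "a \<in> set Q" "b \<in> set Q" "a \<noteq> b" "E v a" "E v b"
    using longest_path_neighbour_has_two_path_neighbours[OF G Q_longest uv(1) Q(3)] \<open>E u v\<close>
    by metis
  obtain P where P: "is_path V E P" "length P = card V - 1" "v \<notin> set P"
    using avoid uv(2) by blast
  have "set P = V - {v}" using set_path_eq_if_avoids[OF G P(1,2) uv(2) P(3)] .
  moreover have "a \<in> V" "b \<in> V" "a \<noteq> v" "b \<noteq> v" "E v u"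
    using ab G \<open>E u v\<close> unfolding simple_graph_def by metis+
  ultimately have "7 \<le> length P"
    using longest_path_three_neighbours[OF G _ uv(2) P(3), of a b u]
      longest_path_if_no_hamiltonian_path[OF G P(1,2) no_ham] ab Q(3) uv by auto
  then show False using P(2) \<open>card V \<le> 7\<close> by linarith
qed

lemma connected_graph_obtain_edge:
  assumes "connected_graph V E" "2 \<le> card V"
  obtains u v where "E u v"
proof -
  have "finite V" using assms(2) by (metis card.infinite not_numeral_le_zero)
  then have "\<not> (\<forall>x\<in>V. \<forall>y\<in>V. x = y)" using assms(2) card_le_Suc0_iff_eq by fastforce
  then obtain x y where xy: "x \<in> V" "y \<in> V" "x \<noteq> y" by blast
  then obtain xs where xs: "is_path V E xs" "hd xs = x" "last xs = y"
    using assms(1) unfolding connected_graph_def by blast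
  have "Suc 0 < length xs"
    using xs xy by (cases xs) (auto simp: is_path_def)
  then show thesis using xs(1) that unfolding is_path_def by blast
qed

lemma psi_le_card:
  assumes "is_kpvc V E k S"
  shows "psi V E k \<le> card S"
  unfolding psi_def using assms by (intro Least_le) blast

lemma psi_card_eq_1_if_hamiltonian_path:
  assumes G: "simple_graph V E" and H: "is_path V E H" "length H = card V"
  shows "psi V E (card V) = 1"
proof -
  have "hd H \<in> V" using set_path_eq_if_length_eq_card[OF G H] H(1)
    unfolding is_path_def by auto
  then have kpvc: "is_kpvc V E (card V) {hd H}"
    using set_path_eq_if_length_eq_card[OF G] unfolding is_kpvc_def by auto
  then have "psi V E (card V) \<le> 1" using psi_le_card by fastforce
  moreover obtain S where S: "is_kpvc V E (card V) S" "card S = psi V E (card V)"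
    using LeastI_ex[of "\<lambda>m. \<exists>S. is_kpvc V E (card V) S \<and> card S = m"] kpvc
    unfolding psi_def by blast
  moreover have "finite S" using G S(1) unfolding simple_graph_def is_kpvc_def
    by (auto dest: finite_subset)
  moreover have "S \<noteq> {}" using S(1) H unfolding is_kpvc_def by auto
  ultimately show ?thesis using card_gt_0_iff[of S] by linarith
qed

theorem mainTheorem13:
  fixes V :: "'a set" and E :: "'a \<Rightarrow> 'a \<Rightarrow> bool" and n :: nat
  assumes "simple_graph V E" and "connected_graph V E"
    and "card V = n" and "2 \<le> n" and "n \<le> 7"
    and "psi V E (n - 1) = 2"
  shows "psi V E n = 1"
proof -
  have avoid: "\<exists>P. is_path V E P \<and> length P = card V - 1 \<and> w \<notin> set P" if "w \<in> V" for w
  proof (rule ccontr)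
    assume "\<not> ?thesis"
    then have "is_kpvc V E (n - 1) {w}" using that unfolding is_kpvc_def assms(3) by blast
    then have "psi V E (n - 1) \<le> 1" using psi_le_card by fastforce
    then show False using assms(6) by simp
  qed
  obtain u v where "E u v" using connected_graph_obtain_edge assms(2-4) by metis
  moreover have "card V \<le> 7" using assms(3,5) by simp
  ultimately obtain H where "is_path V E H" "length H = card V"
    using hamiltonian_path_if_vertices_avoidable[OF assms(1) _ _ avoid] by blast
  then show ?thesis using psi_card_eq_1_if_hamiltonian_path[OF assms(1)] assms(3) by simp
qed

end
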